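(* Let $X_1,\dots,X_n$ be random variables with mean zero and finite variances $\mathrm{Var}(X_i)=\sigma_i^2>0$, and for each $i$ let $(X_1^{*(i)},\dots,X_n^{*(i)})$ have the directional zero bias distribution in direction $i$. Then: 1. $X_i^{*(i)}$ has the same distribution as $X_i^*$, the zero bias transform of $X_i$. 2. If the random vector $(X_1,\dots,X_n)$ has a density, then $X_j^{*(i)}$ has density $f_j^{*(i)}(y)=\int \frac{x_i^2}{\sigma_i^2}f_{ij}(x_i,y)\,dx_i$, where $f_{ij}$ is the joint density of $(X_i,X_j)$. 3. If $X_i$ is independent of $X_j$, then $X_j^{*(i)}$ has the same distribution as $X_j$. 4. $(aX_j)^{*(i)}=aX_j^{*(i)}$ for any constant $a\ne0$.
   Context: Zero bias transform: for $X$ with mean zero and finite variance $\sigma^2$, $X^*$ has the zero bias distribution of $X$ if $\mathbb{E}[Xf(X)]=\sigma^2\mathbb{E}[f'(X^* )]$ for all absolutely continuous $f$ for which the expectations exist. Directional zero bias transform: the directional zero bias distribution in direction $i$ is the law of a random vector $(X_1^{*(i)},\dots,X_n^{*(i)})$ satisfying $\mathbb{E}[X_if(X_1,\dots,X_n)]=\sigma_i^2\mathbb{E}[\partial_if(X_1^{*(i)},\dots,X_n^{*(i)})]$ for all real functions $f$ of $n$ variables for which the expectations exist. In item 4, $(aX_j)^{*(i)}$ denotes the $j$-th coordinate of the direction-$i$ transform of the vector obtained by replacing $X_j$ with $aX_j$. *)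

theory Defs
  imports "HOL-Probability.Probability"
begin

text \<open>Variance of a real random variable X on M (literally the library's
  prob_space.variance, written out since that is a locale abbreviation).\<close>
definition var :: "'a measure \<Rightarrow> ('a \<Rightarrow> real) \<Rightarrow> real" where
  "var M X = (\<integral>\<omega>. (X \<omega> - (\<integral>\<omega>'. X \<omega>' \<partial>M))\<^sup>2 \<partial>M)"

definition upd :: "real ^ 'n \<Rightarrow> 'n \<Rightarrow> real \<Rightarrow> real ^ 'n" where
  "upd x i t = (\<chi> k. if k = i then t else x $ k)"

definition zero_bias :: "'a measure \<Rightarrow> ('a \<Rightarrow> real) \<Rightarrow> 'b measure \<Rightarrow> ('b \<Rightarrow> real) \<Rightarrow> bool" where
  "zero_bias M X N Z \<longleftrightarrow> Z \<in> borel_measurable N \<and>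
     (\<forall>f f'. f \<in> borel_measurable borel \<longrightarrow> f' \<in> borel_measurable borel \<longrightarrow>
        (\<forall>x. (f has_real_derivative f' x) (at x)) \<longrightarrow>
        integrable M (\<lambda>\<omega>. X \<omega> * f (X \<omega>)) \<longrightarrow>
        integrable N (\<lambda>\<omega>. f' (Z \<omega>)) \<longrightarrow>
        (\<integral>\<omega>. X \<omega> * f (X \<omega>) \<partial>M) = var M X * (\<integral>\<omega>. f' (Z \<omega>) \<partial>N))"

definition dir_zero_bias ::
  "'a measure \<Rightarrow> ('n::finite \<Rightarrow> 'a \<Rightarrow> real) \<Rightarrow> 'n \<Rightarrow> 'b measure \<Rightarrow> ('b \<Rightarrow> real ^ 'n) \<Rightarrow> bool" where
  "dir_zero_bias M X i N Y \<longleftrightarrow> Y \<in> borel_measurable N \<and>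
     (\<forall>f f'. f \<in> borel_measurable borel \<longrightarrow> f' \<in> borel_measurable borel \<longrightarrow>
        (\<forall>x. ((\<lambda>t. f (upd x i t)) has_real_derivative f' x) (at (x $ i))) \<longrightarrow>
        integrable M (\<lambda>\<omega>. X i \<omega> * f (\<chi> k. X k \<omega>)) \<longrightarrow>
        integrable N (\<lambda>\<omega>. f' (Y \<omega>)) \<longrightarrow>
        (\<integral>\<omega>. X i \<omega> * f (\<chi> k. X k \<omega>) \<partial>M) = var M (X i) * (\<integral>\<omega>. f' (Y \<omega>) \<partial>N))"

end

theory Submission
  imports Defs
begin

text \<open>Testing the directional identity with \<open>f(x) = x\<^sub>i \<one>\<^sub>A(x\<^sub>j)\<close>, \<open>j \<noteq> i\<close>, whose
  \<open>i\<close>-th partial derivative is \<open>\<one>\<^sub>A(x\<^sub>j)\<close>, gives \<open>E[X\<^sub>i\<^sup>2 \<one>\<^sub>A(X\<^sub>j)] = \<sigma>\<^sub>i\<^sup>2 P(Y\<^sub>j \<in> A)\<close>: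
  the law of \<open>Y\<^sub>j\<close> is the law of \<open>X\<^sub>j\<close> reweighted by \<open>X\<^sub>i\<^sup>2 / \<sigma>\<^sub>i\<^sup>2\<close>. Items 2, 3 and 4
  (for \<open>j \<noteq> i\<close>) are read off from this. Testing with functions of \<open>x\<^sub>i\<close> alone shows that
  \<open>Y\<^sub>i\<close> is a zero bias transform of \<open>X\<^sub>i\<close>, and zero bias laws are unique because
  testing with \<open>sin(t x)/t\<close> and \<open>-cos(t x)/t\<close> pins down their characteristic
  function; this gives item 1 and item 4 for \<open>j = i\<close>.\<close>

lemma zero_bias_measurable: "zero_bias M X N Z \<Longrightarrow> Z \<in> borel_measurable N"
  by (simp add: zero_bias_def)

lemma dir_zero_bias_measurable:
  "dir_zero_bias M X i N Y \<Longrightarrow> (\<lambda>\<omega>. Y \<omega> $ j) \<in> borel_measurable N"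
  unfolding dir_zero_bias_def by (auto intro: measurable_compose[OF _ borel_measurable_nth])

lemma zero_bias_eq:
  assumes "zero_bias M X N Z"
    and "f \<in> borel_measurable borel" "f' \<in> borel_measurable borel"
    and "\<And>x. (f has_real_derivative f' x) (at x)"
    and "integrable M (\<lambda>\<omega>. X \<omega> * f (X \<omega>))" "integrable N (\<lambda>\<omega>. f' (Z \<omega>))"
  shows "(\<integral>\<omega>. X \<omega> * f (X \<omega>) \<partial>M) = var M X * (\<integral>\<omega>. f' (Z \<omega>) \<partial>N)"
  using assms unfolding zero_bias_def by blast

lemma dir_zero_bias_eq:
  assumes "dir_zero_bias M X i N Y"
    and "f \<in> borel_measurable borel" "f' \<in> borel_measurable borel"
    and "\<And>x. ((\<lambda>t. f (upd x i t)) has_real_derivative f' x) (at (x $ i))"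
    and "integrable M (\<lambda>\<omega>. X i \<omega> * f (\<chi> k. X k \<omega>))" "integrable N (\<lambda>\<omega>. f' (Y \<omega>))"
  shows "(\<integral>\<omega>. X i \<omega> * f (\<chi> k. X k \<omega>) \<partial>M) = var M (X i) * (\<integral>\<omega>. f' (Y \<omega>) \<partial>N)"
  using assms unfolding dir_zero_bias_def by blast

lemma var_cmult: "var M (\<lambda>\<omega>. a * X \<omega>) = a\<^sup>2 * var M X"
proof -
  have "(\<lambda>\<omega>. (a * X \<omega> - (\<integral>\<omega>'. a * X \<omega>' \<partial>M))\<^sup>2) = (\<lambda>\<omega>. a\<^sup>2 * (X \<omega> - (\<integral>\<omega>'. X \<omega>' \<partial>M))\<^sup>2)"
    by (simp add: power2_eq_square algebra_simps)
  then show ?thesis unfolding var_def by simp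
qed

lemma (in prob_space) indep_var_self_var_eq_0:
  assumes "indep_var borel X borel X" "integrable M X" "integrable M (\<lambda>\<omega>. (X \<omega>)\<^sup>2)"
  shows "var M X = 0"
proof -
  have "(\<integral>\<omega>. (X \<omega>)\<^sup>2 \<partial>M) = (\<integral>\<omega>. X \<omega> \<partial>M)\<^sup>2"
    using indep_var_lebesgue_integral[OF assms(1,2,2)] by (simp add: power2_eq_square)
  then show ?thesis using variance_eq[OF assms(2,3)] by (simp add: var_def)
qed

lemma (in prob_space) distr_density_indep_eq:
  assumes indep: "indep_var borel W borel V" and W: "integrable M W" "\<And>\<omega>. 0 \<le> W \<omega>"
    and W1: "(\<integral>\<omega>. W \<omega> \<partial>M) = 1"
  shows "distr (density M (\<lambda>\<omega>. ennreal (W \<omega>))) borel V = distr M borel V"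
proof (rule measure_eqI)
  have [measurable]: "W \<in> borel_measurable M" and V[measurable]: "V \<in> borel_measurable M"
    using indep by (auto dest: indep_var_rv1 indep_var_rv2)
  fix A assume "A \<in> sets (distr (density M (\<lambda>\<omega>. ennreal (W \<omega>))) borel V)"
  then have A[measurable]: "A \<in> sets borel" by simp
  have indA: "integrable M (\<lambda>\<omega>. indicator A (V \<omega>) :: real)"
    by (rule integrable_const_bound[where B=1]) auto
  have indep_A: "indep_var borel W borel (\<lambda>\<omega>. indicator A (V \<omega>) :: real)"
    using indep_var_compose[OF indep, of id borel "indicator A" borel] by (simp add: comp_def)
  have "emeasure (distr (density M (\<lambda>\<omega>. ennreal (W \<omega>))) borel V) A
      = emeasure (density M (\<lambda>\<omega>. ennreal (W \<omega>))) (V -` A \<inter> space M)"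
    by (subst emeasure_distr) auto
  also have "\<dots> = (\<integral>\<^sup>+\<omega>. ennreal (W \<omega> * indicator A (V \<omega>)) \<partial>M)"
    by (subst emeasure_density) (auto intro!: nn_integral_cong split: split_indicator)
  also have "\<dots> = ennreal (\<integral>\<omega>. W \<omega> * indicator A (V \<omega>) \<partial>M)"
    using indep_var_integrable[OF indep_A W(1) indA] W(2) by (intro nn_integral_eq_integral) auto
  also have "\<dots> = ennreal (\<integral>\<omega>. indicator A (V \<omega>) \<partial>M)"
    using indep_var_lebesgue_integral[OF indep_A W(1) indA] W1 by simp
  also have "\<dots> = emeasure (distr M borel V) A"
  proof -
    interpret V: prob_space "distr M borel V" by (rule prob_space_distr[OF V])
    show ?thesis
      by (simp add: integral_distr[OF V, symmetric] V.emeasure_eq_measure)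
  qed
  finally show "emeasure (distr (density M (\<lambda>\<omega>. ennreal (W \<omega>))) borel V) A = emeasure (distr M borel V) A" .
qed simp

lemma dir_zero_bias_imp_zero_bias:
  assumes Y: "dir_zero_bias M X i N Y"
  shows "zero_bias M (X i) N (\<lambda>\<omega>. Y \<omega> $ i)"
  unfolding zero_bias_def
proof (intro conjI allI impI)
  show "(\<lambda>\<omega>. Y \<omega> $ i) \<in> borel_measurable N" using dir_zero_bias_measurable[OF Y] .
  fix f f' :: "real \<Rightarrow> real"
  assume fm: "f \<in> borel_measurable borel" and f'm: "f' \<in> borel_measurable borel"
    and der: "\<forall>x. (f has_real_derivative f' x) (at x)"
    and int_f: "integrable M (\<lambda>\<omega>. X i \<omega> * f (X i \<omega>))"
    and int_f': "integrable N (\<lambda>\<omega>. f' (Y \<omega> $ i))"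
  have fm': "(\<lambda>x::real^_. f (x $ i)) \<in> borel_measurable borel"
    and f'm': "(\<lambda>x::real^_. f' (x $ i)) \<in> borel_measurable borel"
    using fm f'm by measurable
  have der': "((\<lambda>t. f (upd x i t $ i)) has_real_derivative f' (x $ i)) (at (x $ i))" for x
    using der by (simp add: upd_def)
  have "integrable M (\<lambda>\<omega>. X i \<omega> * f ((\<chi> k. X k \<omega>) $ i))"
    using int_f by simp
  from dir_zero_bias_eq[OF Y fm' f'm' der' this int_f']
  show "(\<integral>\<omega>. X i \<omega> * f (X i \<omega>) \<partial>M) = var M (X i) * (\<integral>\<omega>. f' (Y \<omega> $ i) \<partial>N)"
    by simp
qed

lemma zero_bias_cmult:
  assumes Z: "zero_bias M X N Z"
  shows "zero_bias M (\<lambda>\<omega>. a * X \<omega>) N (\<lambda>\<omega>. a * Z \<omega>)"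
  unfolding zero_bias_def
proof (intro conjI allI impI)
  show "(\<lambda>\<omega>. a * Z \<omega>) \<in> borel_measurable N"
    using zero_bias_measurable[OF Z] by measurable
  fix f f' :: "real \<Rightarrow> real"
  assume fm: "f \<in> borel_measurable borel" and f'm: "f' \<in> borel_measurable borel"
    and der: "\<forall>x. (f has_real_derivative f' x) (at x)"
    and int_f: "integrable M (\<lambda>\<omega>. a * X \<omega> * f (a * X \<omega>))"
    and int_f': "integrable N (\<lambda>\<omega>. f' (a * Z \<omega>))"
  have "(\<lambda>x. a * f (a * x)) \<in> borel_measurable borel" "(\<lambda>x. a\<^sup>2 * f' (a * x)) \<in> borel_measurable borel"
    using fm f'm by measurable
  moreover have "((\<lambda>x. a * f (a * x)) has_real_derivative a\<^sup>2 * f' (a * x)) (at x)" for x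
  proof -
    have "((\<lambda>x. f (a * x)) has_real_derivative f' (a * x) * a) (at x)"
      by (rule DERIV_chain2[where g="\<lambda>x. a * x", OF der[rule_format]])
        (auto intro!: derivative_eq_intros)
    from DERIV_cmult[OF this, of a] show ?thesis
      by (simp add: power2_eq_square algebra_simps)
  qed
  moreover have "integrable M (\<lambda>\<omega>. X \<omega> * (a * f (a * X \<omega>)))"
    using int_f by (simp add: algebra_simps)
  moreover have "integrable N (\<lambda>\<omega>. a\<^sup>2 * f' (a * Z \<omega>))"
    using int_f' by simp
  ultimately have "(\<integral>\<omega>. X \<omega> * (a * f (a * X \<omega>)) \<partial>M) = var M X * (\<integral>\<omega>. a\<^sup>2 * f' (a * Z \<omega>) \<partial>N)"
    by (rule zero_bias_eq[OF Z])
  then show "(\<integral>\<omega>. a * X \<omega> * f (a * X \<omega>) \<partial>M) = var M (\<lambda>\<omega>. a * X \<omega>) * (\<integral>\<omega>. f' (a * Z \<omega>) \<partial>N)"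
    by (simp add: var_cmult algebra_simps)
qed

lemma (in finite_measure) char_distr_eq_Complex:
  assumes Z: "Z \<in> borel_measurable M"
  shows "char (distr M borel Z) t = Complex (\<integral>\<omega>. cos (t * Z \<omega>) \<partial>M) (\<integral>\<omega>. sin (t * Z \<omega>) \<partial>M)"
proof -
  have iexp: "integrable M (\<lambda>\<omega>. iexp (t * Z \<omega>))"
    by (rule integrable_const_bound[where B=1]) (use Z in \<open>auto simp: norm_exp_i_times\<close>)
  have "char (distr M borel Z) t = (\<integral>\<omega>. iexp (t * Z \<omega>) \<partial>M)"
    unfolding char_def using Z by (simp add: integral_distr)
  then show ?thesis
    using integral_Re[OF iexp] integral_Im[OF iexp] by (simp add: complex_eq_iff Re_exp Im_exp)
qed

lemma zero_bias_sin_cos: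
  assumes Z: "zero_bias M X L Z" and L: "finite_measure L" and X: "integrable M X" and t: "t \<noteq> 0"
  shows "(\<integral>\<omega>. X \<omega> * (sin (t * X \<omega>) / t) \<partial>M) = var M X * (\<integral>\<omega>. cos (t * Z \<omega>) \<partial>L)"
    and "(\<integral>\<omega>. X \<omega> * (- cos (t * X \<omega>) / t) \<partial>M) = var M X * (\<integral>\<omega>. sin (t * Z \<omega>) \<partial>L)"
proof -
  interpret L: finite_measure L by (rule L)
  have [measurable]: "Z \<in> borel_measurable L" using zero_bias_measurable[OF Z] .
  have [measurable]: "X \<in> borel_measurable M" using X by simp
  have int_M: "integrable M (\<lambda>\<omega>. X \<omega> * (g (t * X \<omega>) / t))"
    if [measurable]: "g \<in> borel_measurable borel" and g: "\<And>y. \<bar>g y\<bar> \<le> 1" for g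
  proof (rule Bochner_Integration.integrable_bound[OF integrable_divide[OF X, of t]])
    show "AE \<omega> in M. norm (X \<omega> * (g (t * X \<omega>) / t)) \<le> norm (X \<omega> / t)"
      using g by (auto simp: abs_mult divide_simps intro!: mult_left_le)
  qed measurable
  have int_L: "integrable L (\<lambda>\<omega>. g (t * Z \<omega>))"
    if [measurable]: "g \<in> borel_measurable borel" and g: "\<And>y. \<bar>g y\<bar> \<le> 1" for g :: "real \<Rightarrow> real"
    by (rule L.integrable_const_bound[where B=1]) (use g in auto)
  have d_sin: "((\<lambda>x. sin (t * x) / t) has_real_derivative cos (t * x)) (at x)"
    and d_cos: "((\<lambda>x. - cos (t * x) / t) has_real_derivative sin (t * x)) (at x)" for x
    using t by (auto intro!: derivative_eq_intros)
  have i_sin: "integrable M (\<lambda>\<omega>. X \<omega> * (sin (t * X \<omega>) / t))"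
    and i_cos: "integrable M (\<lambda>\<omega>. X \<omega> * (- cos (t * X \<omega>) / t))"
    using int_M[of sin] int_M[of "\<lambda>y. - cos y"] by simp_all
  have l_cos: "integrable L (\<lambda>\<omega>. cos (t * Z \<omega>))" and l_sin: "integrable L (\<lambda>\<omega>. sin (t * Z \<omega>))"
    using int_L[of cos] int_L[of sin] by simp_all
  have m_sin: "(\<lambda>x. sin (t * x) / t) \<in> borel_measurable borel" "(\<lambda>x. cos (t * x)) \<in> borel_measurable borel"
    and m_cos: "(\<lambda>x. - cos (t * x) / t) \<in> borel_measurable borel" "(\<lambda>x. sin (t * x)) \<in> borel_measurable borel"
    by measurable
  show "(\<integral>\<omega>. X \<omega> * (sin (t * X \<omega>) / t) \<partial>M) = var M X * (\<integral>\<omega>. cos (t * Z \<omega>) \<partial>L)"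
    by (rule zero_bias_eq[OF Z m_sin d_sin i_sin l_cos])
  show "(\<integral>\<omega>. X \<omega> * (- cos (t * X \<omega>) / t) \<partial>M) = var M X * (\<integral>\<omega>. sin (t * Z \<omega>) \<partial>L)"
    by (rule zero_bias_eq[OF Z m_cos d_cos i_cos l_sin])
qed

lemma zero_bias_unique:
  assumes Z1: "zero_bias M X L1 Z1" "prob_space L1" and Z2: "zero_bias M X L2 Z2" "prob_space L2"
    and X: "integrable M X" and var: "var M X \<noteq> 0"
  shows "distr L1 borel Z1 = distr L2 borel Z2"
proof -
  interpret L1: prob_space L1 by (rule Z1(2))
  interpret L2: prob_space L2 by (rule Z2(2))
  have Z1m: "Z1 \<in> borel_measurable L1" and Z2m: "Z2 \<in> borel_measurable L2"
    using zero_bias_measurable Z1(1) Z2(1) by blast+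
  have "char (distr L1 borel Z1) t = char (distr L2 borel Z2) t" for t
  proof (cases "t = 0")
    case True
    then show ?thesis
      using real_distribution.char_zero L1.real_distribution_distr[OF Z1m] L2.real_distribution_distr[OF Z2m]
      by simp
  next
    case False
    then show ?thesis
      using zero_bias_sin_cos[OF Z1(1) L1.finite_measure_axioms X False]
        zero_bias_sin_cos[OF Z2(1) L2.finite_measure_axioms X False] var
      by (simp add: L1.char_distr_eq_Complex[OF Z1m] L2.char_distr_eq_Complex[OF Z2m])
  qed
  then show ?thesis
    using Levy_uniqueness L1.real_distribution_distr[OF Z1m] L2.real_distribution_distr[OF Z2m] by blast
qed

lemma dir_zero_bias_indicator:
  fixes X :: "'n::finite \<Rightarrow> 'a \<Rightarrow> real"
  assumes Y: "dir_zero_bias M X i N Y" and N: "prob_space N" and ji: "j \<noteq> i"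
    and [measurable]: "X i \<in> borel_measurable M" "X j \<in> borel_measurable M"
    and sq: "integrable M (\<lambda>\<omega>. (X i \<omega>)\<^sup>2)" and A[measurable]: "A \<in> sets borel"
  shows "(\<integral>\<omega>. (X i \<omega>)\<^sup>2 * indicator A (X j \<omega>) \<partial>M)
    = var M (X i) * measure (distr N borel (\<lambda>\<omega>. Y \<omega> $ j)) A"
proof -
  interpret N: prob_space N by (rule N)
  define f where "f x = x $ i * indicator A (x $ j)" for x :: "real ^ 'n"
  define f' where "f' x = (indicator A (x $ j) :: real)" for x :: "real ^ 'n"
  have [measurable]: "Y \<in> borel_measurable N" using Y by (simp add: dir_zero_bias_def)
  have Yj[measurable]: "(\<lambda>\<omega>. Y \<omega> $ j) \<in> borel_measurable N" using dir_zero_bias_measurable[OF Y] .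
  have f_Xi: "(\<lambda>\<omega>. X i \<omega> * f (\<chi> k. X k \<omega>)) = (\<lambda>\<omega>. (X i \<omega>)\<^sup>2 * indicator A (X j \<omega>))"
    by (simp add: f_def power2_eq_square mult.assoc)
  have "f \<in> borel_measurable borel" "f' \<in> borel_measurable borel"
    unfolding f_def f'_def by measurable
  moreover have "((\<lambda>t. f (upd x i t)) has_real_derivative f' x) (at (x $ i))" for x
    using ji by (auto simp: f_def f'_def upd_def intro!: derivative_eq_intros)
  moreover have "integrable M (\<lambda>\<omega>. X i \<omega> * f (\<chi> k. X k \<omega>))"
    unfolding f_Xi by (rule Bochner_Integration.integrable_bound[OF sq]) (auto simp: indicator_def)
  moreover have "integrable N (\<lambda>\<omega>. f' (Y \<omega>))"
    unfolding f'_def by (rule N.integrable_const_bound[where B=1]) auto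
  ultimately have "(\<integral>\<omega>. X i \<omega> * f (\<chi> k. X k \<omega>) \<partial>M) = var M (X i) * (\<integral>\<omega>. f' (Y \<omega>) \<partial>N)"
    by (rule dir_zero_bias_eq[OF Y])
  moreover have "(\<integral>\<omega>. f' (Y \<omega>) \<partial>N) = measure (distr N borel (\<lambda>\<omega>. Y \<omega> $ j)) A"
    unfolding f'_def by (subst integral_distr[OF Yj, symmetric]) auto
  ultimately show ?thesis unfolding f_Xi by simp
qed

lemma dir_zero_bias_distr_coordinate:
  fixes X :: "'n::finite \<Rightarrow> 'a \<Rightarrow> real"
  assumes Y: "dir_zero_bias M X i N Y" and N: "prob_space N" and ji: "j \<noteq> i"
    and [measurable]: "X i \<in> borel_measurable M" "X j \<in> borel_measurable M"
    and sq: "integrable M (\<lambda>\<omega>. (X i \<omega>)\<^sup>2)" and var: "var M (X i) > 0"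
  shows "distr N borel (\<lambda>\<omega>. Y \<omega> $ j)
    = distr (density M (\<lambda>\<omega>. ennreal ((X i \<omega>)\<^sup>2 / var M (X i)))) borel (X j)"
    (is "?L = distr ?W borel (X j)")
proof (rule measure_eqI)
  interpret L: prob_space ?L
    by (rule prob_space.prob_space_distr[OF N dir_zero_bias_measurable[OF Y]])
  fix A assume "A \<in> sets ?L"
  then have A[measurable]: "A \<in> sets borel" by simp
  have int: "integrable M (\<lambda>\<omega>. (X i \<omega>)\<^sup>2 / var M (X i) * indicator A (X j \<omega>))"
    by (rule Bochner_Integration.integrable_bound[OF integrable_divide[OF sq]])
      (auto simp: indicator_def)
  have "emeasure ?L A = ennreal (\<integral>\<omega>. (X i \<omega>)\<^sup>2 / var M (X i) * indicator A (X j \<omega>) \<partial>M)"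
    using dir_zero_bias_indicator[OF Y N ji _ _ sq A] var by (simp add: L.emeasure_eq_measure)
  also have "\<dots> = (\<integral>\<^sup>+\<omega>. ennreal ((X i \<omega>)\<^sup>2 / var M (X i) * indicator A (X j \<omega>)) \<partial>M)"
    using var by (intro nn_integral_eq_integral[symmetric] int) auto
  also have "\<dots> = emeasure ?W (X j -` A \<inter> space M)"
    by (subst emeasure_density) (auto intro!: nn_integral_cong split: split_indicator)
  also have "\<dots> = emeasure (distr ?W borel (X j)) A"
    by (subst emeasure_distr) auto
  finally show "emeasure ?L A = emeasure (distr ?W borel (X j)) A" .
qed simp

lemma distributed_snd_under_density:
  assumes S: "sigma_finite_measure S" and T: "sigma_finite_measure T"
    and UV: "distributed M (S \<Otimes>\<^sub>M T) (\<lambda>\<omega>. (U \<omega>, V \<omega>)) f"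
    and [measurable]: "g \<in> borel_measurable S"
  shows "distributed (density M (\<lambda>\<omega>. g (U \<omega>))) T V (\<lambda>y. \<integral>\<^sup>+x. g x * f (x, y) \<partial>S)"
proof -
  interpret ST: pair_sigma_finite S T using S T by (simp add: pair_sigma_finite_def)
  have [measurable]: "f \<in> borel_measurable (S \<Otimes>\<^sub>M T)"
    and UV_m: "(\<lambda>\<omega>. (U \<omega>, V \<omega>)) \<in> measurable M (S \<Otimes>\<^sub>M T)"
    and UV_distr: "distr M (S \<Otimes>\<^sub>M T) (\<lambda>\<omega>. (U \<omega>, V \<omega>)) = density (S \<Otimes>\<^sub>M T) f"
    using UV by (auto simp: distributed_def)
  have [measurable]: "U \<in> measurable M S" "V \<in> measurable M T"
    using UV_m by (auto simp: measurable_pair_iff comp_def)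
  define h where "h y = (\<integral>\<^sup>+x. g x * f (x, y) \<partial>S)" for y
  have [measurable]: "h \<in> borel_measurable T"
    unfolding h_def by measurable
  have "distr (density M (\<lambda>\<omega>. g (U \<omega>))) T V = density T h"
  proof (rule measure_eqI)
    fix A assume "A \<in> sets (distr (density M (\<lambda>\<omega>. g (U \<omega>))) T V)"
    then have A[measurable]: "A \<in> sets T" by simp
    have "emeasure (distr (density M (\<lambda>\<omega>. g (U \<omega>))) T V) A
        = emeasure (density M (\<lambda>\<omega>. g (U \<omega>))) (V -` A \<inter> space M)"
      by (subst emeasure_distr) auto
    also have "\<dots> = (\<integral>\<^sup>+\<omega>. g (U \<omega>) * indicator A (V \<omega>) \<partial>M)"
      by (subst emeasure_density) (auto intro!: nn_integral_cong split: split_indicator)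
    also have "\<dots> = (\<integral>\<^sup>+z. g (fst z) * indicator A (snd z) \<partial>distr M (S \<Otimes>\<^sub>M T) (\<lambda>\<omega>. (U \<omega>, V \<omega>)))"
      by (subst nn_integral_distr) auto
    also have "\<dots> = (\<integral>\<^sup>+z. f z * (g (fst z) * indicator A (snd z)) \<partial>(S \<Otimes>\<^sub>M T))"
      unfolding UV_distr by (subst nn_integral_density) auto
    also have "\<dots> = (\<integral>\<^sup>+y. (\<integral>\<^sup>+x. f (x, y) * (g x * indicator A y) \<partial>S) \<partial>T)"
      using ST.nn_integral_snd[of "\<lambda>z. f z * (g (fst z) * indicator A (snd z))"] by simp
    also have "\<dots> = (\<integral>\<^sup>+y. h y * indicator A y \<partial>T)"
      unfolding h_def by (intro nn_integral_cong) (simp split: split_indicator add: mult_ac)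
    also have "\<dots> = emeasure (density T h) A"
      by (simp add: emeasure_density)
    finally show "emeasure (distr (density M (\<lambda>\<omega>. g (U \<omega>))) T V) A = emeasure (density T h) A" .
  qed simp
  then show ?thesis
    unfolding distributed_def h_def[symmetric] by simp
qed

lemma dir_zero_bias_coordinate_density:
  fixes X :: "'n::finite \<Rightarrow> 'a \<Rightarrow> real"
  assumes Y: "dir_zero_bias M X i N Y" and N: "prob_space N" and ji: "j \<noteq> i"
    and [measurable]: "X i \<in> borel_measurable M" "X j \<in> borel_measurable M"
    and sq: "integrable M (\<lambda>\<omega>. (X i \<omega>)\<^sup>2)" and var: "var M (X i) > 0"
    and fij: "distributed M (lborel \<Otimes>\<^sub>M lborel) (\<lambda>\<omega>. (X i \<omega>, X j \<omega>)) fij"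
  shows "distributed N lborel (\<lambda>\<omega>. Y \<omega> $ j)
    (\<lambda>y. \<integral>\<^sup>+x. ennreal (x\<^sup>2 / var M (X i)) * fij (x, y) \<partial>lborel)"
proof -
  let ?W = "density M (\<lambda>\<omega>. ennreal ((X i \<omega>)\<^sup>2 / var M (X i)))"
  have "distributed ?W lborel (X j) (\<lambda>y. \<integral>\<^sup>+x. ennreal (x\<^sup>2 / var M (X i)) * fij (x, y) \<partial>lborel)"
    by (rule distributed_snd_under_density[where g="\<lambda>x. ennreal (x\<^sup>2 / var M (X i))",
          OF lborel.sigma_finite_measure_axioms lborel.sigma_finite_measure_axioms fij]) simp
  moreover have "distr N lborel (\<lambda>\<omega>. Y \<omega> $ j) = distr ?W lborel (X j)"
    using dir_zero_bias_distr_coordinate[OF Y N ji _ _ sq var]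
    by (simp add: distr_cong[OF refl sets_lborel refl] distr_cong[OF refl sets_lborel refl, of ?W])
  ultimately show ?thesis
    using dir_zero_bias_measurable[OF Y] by (simp add: distributed_def)
qed

lemma dir_zero_bias_indep_coordinate:
  fixes X :: "'n::finite \<Rightarrow> 'a \<Rightarrow> real"
  assumes M: "prob_space M" and Y: "dir_zero_bias M X i N Y" and N: "prob_space N"
    and [measurable]: "X i \<in> borel_measurable M" "X j \<in> borel_measurable M"
    and int: "integrable M (X i)" and sq: "integrable M (\<lambda>\<omega>. (X i \<omega>)\<^sup>2)"
    and mean0: "(\<integral>\<omega>. X i \<omega> \<partial>M) = 0" and var: "var M (X i) > 0"
    and indep: "prob_space.indep_var M borel (X i) borel (X j)"
  shows "distr N borel (\<lambda>\<omega>. Y \<omega> $ j) = distr M borel (X j)"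
proof (cases "j = i")
  case True
  with prob_space.indep_var_self_var_eq_0[OF M _ int sq] indep var show ?thesis
    by simp
next
  case False
  have var_eq: "var M (X i) = (\<integral>\<omega>. (X i \<omega>)\<^sup>2 \<partial>M)"
    using mean0 by (simp add: var_def)
  have "prob_space.indep_var M borel (\<lambda>\<omega>. (X i \<omega>)\<^sup>2 / var M (X i)) borel (X j)"
    using prob_space.indep_var_compose[OF M indep, of "\<lambda>x. x\<^sup>2 / var M (X i)" borel id borel]
    by (simp add: comp_def)
  then have "distr (density M (\<lambda>\<omega>. ennreal ((X i \<omega>)\<^sup>2 / var M (X i)))) borel (X j)
      = distr M borel (X j)"
    by (rule prob_space.distr_density_indep_eq[OF M]) (use sq var var_eq in auto)
  then show ?thesis
    using dir_zero_bias_distr_coordinate[OF Y N False _ _ sq var] by simp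
qed

lemma dir_zero_bias_cmult_coordinate:
  fixes X :: "'n::finite \<Rightarrow> 'a \<Rightarrow> real"
  assumes Y: "dir_zero_bias M X i N Y" "prob_space N"
    and Y': "dir_zero_bias M (X(j := (\<lambda>\<omega>. a * X j \<omega>))) i N' Y'" "prob_space N'"
    and [measurable]: "X i \<in> borel_measurable M" "X j \<in> borel_measurable M"
    and int: "integrable M (X i)" and sq: "integrable M (\<lambda>\<omega>. (X i \<omega>)\<^sup>2)"
    and var: "var M (X i) > 0" and a: "a \<noteq> 0"
  shows "distr N' borel (\<lambda>\<omega>. Y' \<omega> $ j) = distr N borel (\<lambda>\<omega>. a * Y \<omega> $ j)"
proof (cases "j = i")
  case True
  have "zero_bias M (\<lambda>\<omega>. a * X i \<omega>) N' (\<lambda>\<omega>. Y' \<omega> $ i)"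
    using dir_zero_bias_imp_zero_bias[OF Y'(1)] True by simp
  moreover have "zero_bias M (\<lambda>\<omega>. a * X i \<omega>) N (\<lambda>\<omega>. a * Y \<omega> $ i)"
    by (rule zero_bias_cmult[OF dir_zero_bias_imp_zero_bias[OF Y(1)]])
  ultimately have "distr N' borel (\<lambda>\<omega>. Y' \<omega> $ i) = distr N borel (\<lambda>\<omega>. a * Y \<omega> $ i)"
    by (rule zero_bias_unique[OF _ Y'(2) _ Y(2)]) (use int a var in \<open>simp_all add: var_cmult\<close>)
  with True show ?thesis by simp
next
  case False
  let ?W = "density M (\<lambda>\<omega>. ennreal ((X i \<omega>)\<^sup>2 / var M (X i)))"
  have [measurable]: "(\<lambda>\<omega>. Y \<omega> $ j) \<in> borel_measurable N"
    using dir_zero_bias_measurable[OF Y(1)] .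
  have "distr N' borel (\<lambda>\<omega>. Y' \<omega> $ j) = distr ?W borel (\<lambda>\<omega>. a * X j \<omega>)"
    using dir_zero_bias_distr_coordinate[OF Y' False] False sq var by simp
  also have "\<dots> = distr (distr ?W borel (X j)) borel (\<lambda>x. a * x)"
    by (simp add: distr_distr comp_def)
  also have "\<dots> = distr (distr N borel (\<lambda>\<omega>. Y \<omega> $ j)) borel (\<lambda>x. a * x)"
    using dir_zero_bias_distr_coordinate[OF Y False _ _ sq var] by simp
  also have "\<dots> = distr N borel (\<lambda>\<omega>. a * Y \<omega> $ j)"
    by (simp add: distr_distr comp_def)
  finally show ?thesis .
qed

theorem proposition2p3:
  fixes M :: "'a measure" and X :: "'n::finite \<Rightarrow> 'a \<Rightarrow> real"
    and i :: 'n and N :: "'b measure" and Y :: "'b \<Rightarrow> real ^ 'n"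
  assumes M: "prob_space M"
    and meas: "\<And>k. X k \<in> borel_measurable M"
    and sq_int: "\<And>k. integrable M (\<lambda>\<omega>. (X k \<omega>)\<^sup>2)"
    and mean0: "\<And>k. (\<integral>\<omega>. X k \<omega> \<partial>M) = 0"
    and varpos: "\<And>k. var M (X k) > 0"
    and N: "prob_space N"
    and Y: "dir_zero_bias M X i N Y"
  shows
    \<comment> \<open>1.\<close>
    "(zero_bias M (X i) N (\<lambda>\<omega>. Y \<omega> $ i) \<and>
      (\<forall>(L :: 'c measure) Z. prob_space L \<longrightarrow> zero_bias M (X i) L Z \<longrightarrow>
          distr N borel (\<lambda>\<omega>. Y \<omega> $ i) = distr L borel Z))
     \<and>
     \<comment> \<open>2.\<close>
     (\<forall>g j fij. distributed M lborel (\<lambda>\<omega>. \<chi> k. X k \<omega>) g \<longrightarrow> j \<noteq> i \<longrightarrow>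
        distributed M (lborel \<Otimes>\<^sub>M lborel) (\<lambda>\<omega>. (X i \<omega>, X j \<omega>)) fij \<longrightarrow>
        distributed N lborel (\<lambda>\<omega>. Y \<omega> $ j)
          (\<lambda>y. \<integral>\<^sup>+ x. ennreal (x\<^sup>2 / var M (X i)) * fij (x, y) \<partial>lborel))
     \<and>
     \<comment> \<open>3.\<close>
     (\<forall>j. prob_space.indep_var M borel (X i) borel (X j) \<longrightarrow>
        distr N borel (\<lambda>\<omega>. Y \<omega> $ j) = distr M borel (X j))
     \<and>
     \<comment> \<open>4.\<close>
     (\<forall>j (a::real). a \<noteq> 0 \<longrightarrow>
        (\<forall>(N' :: 'd measure) Y'. prob_space N' \<longrightarrow>
           dir_zero_bias M (X(j := (\<lambda>\<omega>. a * X j \<omega>))) i N' Y' \<longrightarrow>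
           distr N' borel (\<lambda>\<omega>. Y' \<omega> $ j) = distr N borel (\<lambda>\<omega>. a * Y \<omega> $ j)))"
proof -
  interpret M: prob_space M by (rule M)
  have int: "integrable M (X k)" for k
    using M.square_integrable_imp_integrable[OF meas sq_int] .
  have zb: "zero_bias M (X i) N (\<lambda>\<omega>. Y \<omega> $ i)"
    by (rule dir_zero_bias_imp_zero_bias[OF Y])
  have var_ne: "var M (X i) \<noteq> 0"
    using varpos[of i] by simp
  show ?thesis
  proof (intro conjI allI impI)
    show "zero_bias M (X i) N (\<lambda>\<omega>. Y \<omega> $ i)" by (rule zb)
  next
    fix L :: "'c measure" and Z assume "zero_bias M (X i) L Z" "prob_space L"
    then show "distr N borel (\<lambda>\<omega>. Y \<omega> $ i) = distr L borel Z"
      by (rule zero_bias_unique[OF zb N _ _ int var_ne])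
  next
    fix j fij assume "j \<noteq> i" "distributed M (lborel \<Otimes>\<^sub>M lborel) (\<lambda>\<omega>. (X i \<omega>, X j \<omega>)) fij"
    then show "distributed N lborel (\<lambda>\<omega>. Y \<omega> $ j)
        (\<lambda>y. \<integral>\<^sup>+ x. ennreal (x\<^sup>2 / var M (X i)) * fij (x, y) \<partial>lborel)"
      by (rule dir_zero_bias_coordinate_density[OF Y N _ meas meas sq_int varpos])
  next
    fix j assume "M.indep_var borel (X i) borel (X j)"
    then show "distr N borel (\<lambda>\<omega>. Y \<omega> $ j) = distr M borel (X j)"
      by (rule dir_zero_bias_indep_coordinate[OF M Y N meas meas int sq_int mean0 varpos])
  next
    fix j and a :: real and N' :: "'d measure" and Y'
    assume "dir_zero_bias M (X(j := (\<lambda>\<omega>. a * X j \<omega>))) i N' Y'" "prob_space N'" "a \<noteq> 0"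
    then show "distr N' borel (\<lambda>\<omega>. Y' \<omega> $ j) = distr N borel (\<lambda>\<omega>. a * Y \<omega> $ j)"
      by (rule dir_zero_bias_cmult_coordinate[OF Y N _ _ meas meas int sq_int varpos])
  qed
qed

end
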